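(* $\widehat{C}_{2,0} = \widehat{C}_{2,1} = 1$. Equivalently (for $m=1$, which implies the case $m=0$): for every $k \in \mathbb{N}$ and every function $F \colon \mathcal{K}_k^2 \to \mathbb{Z}$ with $|F(K_1) - F(K_2)| \le 1$ whenever $K_1, K_2 \in \mathcal{K}_k^2$ share a common edge ($\dim(K_1 \cap K_2) \ge 1$), there exist $p \in \mathbb{Z}$ and $\mathcal{S} \subset F^{-1}[\{p\}]$ such that $\bigcup \mathcal{S}$ connects some opposite faces of $I^2$.
   Context: $\mathcal{K}_k^n = \{\prod_{s=1}^n [\frac{i_s-1}{k}, \frac{i_s}{k}] : i_s \in \{1,\dots,k\}\}$ (cubes dividing $I^n=[0,1]^n$); $\dim$ is topological dimension; a set $S\subset I^n$ connects some opposite faces of $I^n$ if it is connected and meets both $\{z_i=0\}$ and $\{z_i=1\}$ for some $i$; $\mathbb{Z}^{n-1}$ has the $\ell^\infty$ norm; $P\subset\mathbb{Z}^{n-1}$ is $1$-connected if any two points are joined by a finite chain in $P$ with consecutive $\ell^\infty$-distances $\le 1$. $\widehat{C}_{n,m}$ is the least constant $C>0$ such that: for every $k\in\mathbb{N}$ and every $F\colon\mathcal{K}_k^n\to\mathbb{Z}^{n-1}$ with $\|F(K_1)-F(K_2)\|_\infty\le 1$ whenever $\dim(K_1\cap K_2)\ge m$, there exist a $1$-connected $P\subset\mathbb{Z}^{n-1}$ with $|P|\le C$ and $\mathcal{S}\subset F^{-1}[P]$ with $\bigcup\mathcal{S}$ connecting some opposite faces of $I^n$. *)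

theory Defs
  imports "HOL-Analysis.Analysis"
begin

definition grid_cubes :: "nat \<Rightarrow> (real \<times> real) set set" where
  "grid_cubes k = {cbox (real (i - 1) / real k, real (j - 1) / real k) (real i / real k, real j / real k)
                    | i j. i \<in> {1..k} \<and> j \<in> {1..k}}"

definition connects_opposite_faces :: "(real \<times> real) set \<Rightarrow> bool" where
  "connects_opposite_faces S \<longleftrightarrow> connected S \<and>
     (((\<exists>z\<in>S. fst z = 0) \<and> (\<exists>z\<in>S. fst z = 1)) \<or> ((\<exists>z\<in>S. snd z = 0) \<and> (\<exists>z\<in>S. snd z = 1)))"

text \<open>1-connectedness of a subset of Z^1 = Z (l^infinity norm = absolute value).\<close>
definition one_connected :: "int set \<Rightarrow> bool" where
  "one_connected P \<longleftrightarrow> (\<forall>p\<in>P. \<forall>q\<in>P. \<exists>xs. xs \<noteq> [] \<and> hd xs = p \<and> last xs = q \<and> set xs \<subseteq> P \<and>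
       (\<forall>i. Suc i < length xs \<longrightarrow> \<bar>xs ! Suc i - xs ! i\<bar> \<le> 1))"

text \<open>Admissibility of F for the parameter m: neighbouring squares (intersection of
  dimension \<ge> m) get values differing by at most 1.  The intersection of two grid
  squares is convex (possibly empty), so its topological dimension equals its affine
  dimension (aff_dim {} = -1).\<close>
definition admissible2 :: "nat \<Rightarrow> nat \<Rightarrow> ((real \<times> real) set \<Rightarrow> int) \<Rightarrow> bool" where
  "admissible2 m k F \<longleftrightarrow> (\<forall>K1\<in>grid_cubes k. \<forall>K2\<in>grid_cubes k.
      aff_dim (K1 \<inter> K2) \<ge> int m \<longrightarrow> \<bar>F K1 - F K2\<bar> \<le> 1)"

definition good_const2 :: "nat \<Rightarrow> real \<Rightarrow> bool" where
  "good_const2 m C \<longleftrightarrow> (\<forall>k::nat. k \<ge> 1 \<longrightarrow> (\<forall>F. admissible2 m k F \<longrightarrow>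
      (\<exists>P::int set. finite P \<and> one_connected P \<and> real (card P) \<le> C \<and>
        (\<exists>\<S>. \<S> \<subseteq> grid_cubes k \<and> (\<forall>K\<in>\<S>. F K \<in> P) \<and> connects_opposite_faces (\<Union>\<S>)))))"

definition C_hat2 :: "nat \<Rightarrow> real" where
  "C_hat2 m = Inf {C. C > 0 \<and> good_const2 m C}"

end

theory Submission
  imports Defs
begin

(*
  Suppose no level set U_p = \<Union>{K. F K = p} contains a connected set joining opposite faces.
  A planar separation argument then gives, for every p, a left-right path L_p and a bottom-top
  path T_p in the square avoiding U_p. Two cells sharing a point are linked by a third cell through
  that point which shares an edge with both, so a cell of level > p and a cell of level < p can
  only meet inside U_p; hence each of L_p, T_p stays among the cells above p or among those below p.
  By the Fashoda meet theorem every L_p meets every T_q. If L_p lies above p, then so does T_p,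
  and T_p meeting L_(p+1) outside U_p forces L_(p+1) above p+1. Starting below the minimum of F,
  this climbs to a level above the maximum of F, where nothing lies above: contradiction.
*)

definition cell :: "nat \<Rightarrow> nat \<Rightarrow> nat \<Rightarrow> (real \<times> real) set" where
  "cell k i j = cbox (real (i - 1) / real k, real (j - 1) / real k) (real i / real k, real j / real k)"

lemma grid_cubes_eq: "grid_cubes k = {cell k i j | i j. i \<in> {1..k} \<and> j \<in> {1..k}}"
  unfolding grid_cubes_def cell_def by simp

lemma mem_cell:
  assumes "1 \<le> i" "1 \<le> j"
  shows "z \<in> cell k i j \<longleftrightarrow> (real i - 1) / real k \<le> fst z \<and> fst z \<le> real i / real k \<and>
     (real j - 1) / real k \<le> snd z \<and> snd z \<le> real j / real k"
  using assms by (cases z) (simp add: cell_def of_nat_diff)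

lemma mem_unit_square: "(z :: real \<times> real) \<in> cbox (0, 0) (1, 1) \<longleftrightarrow> 0 \<le> fst z \<and> fst z \<le> 1 \<and> 0 \<le> snd z \<and> snd z \<le> 1"
  by (cases z) simp

lemma cell_subset_unit_square:
  assumes "i \<in> {1..k}" "j \<in> {1..k}"
  shows "cell k i j \<subseteq> cbox (0, 0) (1, 1)"
proof
  fix z assume "z \<in> cell k i j"
  then have "(real i - 1) / real k \<le> fst z \<and> fst z \<le> real i / real k \<and>
      (real j - 1) / real k \<le> snd z \<and> snd z \<le> real j / real k"
    using assms by (simp add: mem_cell)
  moreover have "0 \<le> (real i - 1) / real k" "0 \<le> (real j - 1) / real k"
    using assms by (simp_all add: divide_nonneg_nonneg)
  moreover have "real i / real k \<le> 1" "real j / real k \<le> 1"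
    using assms by (simp_all add: divide_le_eq_1)
  ultimately show "z \<in> cbox (0, 0) (1, 1)" unfolding mem_unit_square by linarith
qed

lemma grid_cube_props:
  assumes "K \<in> grid_cubes k"
  shows "closed K" "connected K" "K \<subseteq> cbox (0, 0) (1, 1)"
proof -
  obtain i j where K: "K = cell k i j" "i \<in> {1..k}" "j \<in> {1..k}"
    using assms unfolding grid_cubes_eq by blast
  then show "closed K" "connected K" by (simp_all add: cell_def closed_cbox convex_connected)
  show "K \<subseteq> cbox (0, 0) (1, 1)" using K cell_subset_unit_square by blast
qed

lemma finite_grid_cubes: "finite (grid_cubes k)"
  unfolding grid_cubes_eq by (rule finite_image_set2) simp_all

lemma unit_interval_grid_cover:
  fixes t :: real
  assumes "k \<ge> 1" "0 \<le> t" "t \<le> 1"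
  obtains i where "i \<in> {1..k}" "(real i - 1) / real k \<le> t" "t \<le> real i / real k"
proof
  define i where "i = max 1 (nat \<lceil>t * real k\<rceil>)"
  have k: "real k > 0" using assms by simp
  have "t * real k \<le> real k" using assms k by (simp add: mult_le_cancel_right1)
  then show "i \<in> {1..k}" using assms unfolding i_def by (auto simp: nat_le_iff ceiling_le_iff)
  have tk: "0 \<le> t * real k" using assms by simp
  then have "real (nat \<lceil>t * real k\<rceil>) = of_int \<lceil>t * real k\<rceil>" by simp
  then have "real i - 1 \<le> t * real k" "t * real k \<le> real i"
    unfolding i_def using tk ceiling_correct[of "t * real k"] by (auto simp: max_def le_nat_iff)
  then show "(real i - 1) / real k \<le> t" "t \<le> real i / real k"
    using k by (auto simp: divide_le_eq le_divide_eq)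
qed

lemma unit_square_subset_grid_cubes:
  assumes "k \<ge> 1"
  shows "cbox (0, 0) (1, 1) \<subseteq> \<Union>(grid_cubes k)"
proof
  fix z :: "real \<times> real" assume "z \<in> cbox (0, 0) (1, 1)"
  then have "0 \<le> fst z" "fst z \<le> 1" "0 \<le> snd z" "snd z \<le> 1"
    by (simp_all add: mem_unit_square)
  obtain i where i: "i \<in> {1..k}" "(real i - 1) / real k \<le> fst z" "fst z \<le> real i / real k"
    using unit_interval_grid_cover[OF assms \<open>0 \<le> fst z\<close> \<open>fst z \<le> 1\<close>] .
  obtain j where j: "j \<in> {1..k}" "(real j - 1) / real k \<le> snd z" "snd z \<le> real j / real k"
    using unit_interval_grid_cover[OF assms \<open>0 \<le> snd z\<close> \<open>snd z \<le> 1\<close>] .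
  have "z \<in> cell k i j" using i j by (simp add: mem_cell)
  then show "z \<in> \<Union>(grid_cubes k)" unfolding grid_cubes_eq using i j by blast
qed

lemma aff_dim_ge_1:
  fixes S :: "'a::euclidean_space set"
  assumes "p \<in> S" "q \<in> S" "p \<noteq> q"
  shows "1 \<le> aff_dim S"
  using assms aff_dim_subset[of "{p, q}" S] aff_dim_2[of p q] by auto

lemma min_mem_grid_interval:
  assumes "j \<le> j' + 1"
  shows "(real j - 1) / real k \<le> real (min j j') / real k" "real (min j j') / real k \<le> real j / real k"
  using assms by (simp_all add: divide_right_mono)

lemma aff_dim_Int_adjacent_cells:
  assumes "k \<ge> 1" "1 \<le> i" "1 \<le> j" "1 \<le> i'" "1 \<le> j'"
    and "(i = i' \<and> j \<le> j' + 1 \<and> j' \<le> j + 1) \<or> (j = j' \<and> i \<le> i' + 1 \<and> i' \<le> i + 1)"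
  shows "1 \<le> aff_dim (cell k i j \<inter> cell k i' j')"
proof -
  have k: "real k > 0" using assms by simp
  then have ne: "(real n - 1) / real k \<noteq> real n / real k" for n by (simp add: divide_cancel_right)
  from assms(6) consider "i = i'" "j \<le> j' + 1" "j' \<le> j + 1"
    | "j = j'" "i \<le> i' + 1" "i' \<le> i + 1" by blast
  then show ?thesis
  proof cases
    case 1
    let ?y = "real (min j j') / real k"
    have "((real i - 1) / real k, ?y) \<in> cell k i j \<inter> cell k i' j'"
      "(real i / real k, ?y) \<in> cell k i j \<inter> cell k i' j'"
      using 1 assms min_mem_grid_interval[of j j' k] min_mem_grid_interval[of j' j k]
      by (auto simp: mem_cell min.commute divide_right_mono)
    with ne show ?thesis by (metis aff_dim_ge_1 prod.inject)
  next
    case 2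
    let ?x = "real (min i i') / real k"
    have "(?x, (real j - 1) / real k) \<in> cell k i j \<inter> cell k i' j'"
      "(?x, real j / real k) \<in> cell k i j \<inter> cell k i' j'"
      using 2 assms min_mem_grid_interval[of i i' k] min_mem_grid_interval[of i' i k]
      by (auto simp: mem_cell min.commute divide_right_mono)
    with ne show ?thesis by (metis aff_dim_ge_1 prod.inject)
  qed
qed

lemma grid_index_close:
  assumes "k \<ge> 1" "(real i - 1) / real k \<le> x" "x \<le> real i' / real k"
  shows "i \<le> i' + 1"
proof -
  have "(real i - 1) / real k \<le> real i' / real k" using assms by linarith
  then have "real i - 1 \<le> real i'" using assms(1) by (simp add: divide_le_cancel)
  then show ?thesis by linarith
qed

lemma grid_cubes_edge_neighbour:
  assumes "K1 \<in> grid_cubes k" "K2 \<in> grid_cubes k" "z \<in> K1" "z \<in> K2"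
  obtains K3 where "K3 \<in> grid_cubes k" "z \<in> K3" "1 \<le> aff_dim (K1 \<inter> K3)" "1 \<le> aff_dim (K3 \<inter> K2)"
proof -
  obtain i1 j1 i2 j2 where K: "K1 = cell k i1 j1" "K2 = cell k i2 j2"
    and ij: "i1 \<in> {1..k}" "j1 \<in> {1..k}" "i2 \<in> {1..k}" "j2 \<in> {1..k}"
    using assms(1,2) unfolding grid_cubes_eq by blast
  then have k: "k \<ge> 1" by simp
  have z1: "(real i1 - 1) / real k \<le> fst z \<and> fst z \<le> real i1 / real k \<and>
      (real j1 - 1) / real k \<le> snd z \<and> snd z \<le> real j1 / real k"
    using assms(3) K ij by (simp add: mem_cell)
  have z2: "(real i2 - 1) / real k \<le> fst z \<and> fst z \<le> real i2 / real k \<and>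
      (real j2 - 1) / real k \<le> snd z \<and> snd z \<le> real j2 / real k"
    using assms(4) K ij by (simp add: mem_cell)
  have "i1 \<le> i2 + 1" "i2 \<le> i1 + 1" "j1 \<le> j2 + 1" "j2 \<le> j1 + 1"
    using z1 z2 grid_index_close[OF k] by meson+
  then have "1 \<le> aff_dim (cell k i1 j1 \<inter> cell k i1 j2)" "1 \<le> aff_dim (cell k i1 j2 \<inter> cell k i2 j2)"
    using k ij by (simp_all add: aff_dim_Int_adjacent_cells)
  moreover have "z \<in> cell k i1 j2" using z1 z2 ij by (simp add: mem_cell)
  moreover have "cell k i1 j2 \<in> grid_cubes k" using ij unfolding grid_cubes_eq by blast
  ultimately show ?thesis using that K by blast
qed

definition grid_region :: "nat \<Rightarrow> ((real \<times> real) set \<Rightarrow> int) \<Rightarrow> (int \<Rightarrow> bool) \<Rightarrow> (real \<times> real) set" where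
  "grid_region k F P = \<Union>{K \<in> grid_cubes k. P (F K)}"

lemma closed_grid_region: "closed (grid_region k F P)"
  unfolding grid_region_def using finite_grid_cubes grid_cube_props(1) by (intro closed_Union) auto

lemma grid_region_separates_levels:
  assumes "admissible2 1 k F"
  shows "grid_region k F (\<lambda>v. p < v) \<inter> grid_region k F (\<lambda>v. v \<le> p) \<subseteq> grid_region k F (\<lambda>v. v = p)"
proof
  fix z assume "z \<in> grid_region k F (\<lambda>v. p < v) \<inter> grid_region k F (\<lambda>v. v \<le> p)"
  then obtain K1 K2 where K1: "K1 \<in> grid_cubes k" "p < F K1" "z \<in> K1"
    and K2: "K2 \<in> grid_cubes k" "F K2 \<le> p" "z \<in> K2"
    unfolding grid_region_def by blast
  obtain K3 where K3: "K3 \<in> grid_cubes k" "z \<in> K3" "1 \<le> aff_dim (K1 \<inter> K3)" "1 \<le> aff_dim (K3 \<inter> K2)"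
    using grid_cubes_edge_neighbour[OF K1(1) K2(1) K1(3) K2(3)] .
  have "\<bar>F K1 - F K3\<bar> \<le> 1" "\<bar>F K3 - F K2\<bar> \<le> 1"
    using assms K1 K2 K3 unfolding admissible2_def by simp_all
  then have "F K2 = p \<or> F K3 = p" using K1(2) K2(2) by linarith
  then show "z \<in> grid_region k F (\<lambda>v. v = p)"
    unfolding grid_region_def using K2 K3 by blast
qed

lemma path_avoiding_level_in_one_side:
  assumes "admissible2 1 k F" "k \<ge> 1" "path g"
    and "path_image g \<subseteq> cbox (0, 0) (1, 1) - grid_region k F (\<lambda>v. v = p)"
  shows "path_image g \<subseteq> grid_region k F (\<lambda>v. p < v) \<or> path_image g \<subseteq> grid_region k F (\<lambda>v. v < p)"
proof -
  have "cbox (0, 0) (1, 1) - grid_region k F (\<lambda>v. v = p)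
      \<subseteq> grid_region k F (\<lambda>v. p < v) \<union> grid_region k F (\<lambda>v. v < p)"
    using unit_square_subset_grid_cubes[OF assms(2)] unfolding grid_region_def
    by (force simp: neq_iff)
  moreover have "grid_region k F (\<lambda>v. p < v) \<inter> grid_region k F (\<lambda>v. v < p)
      \<subseteq> grid_region k F (\<lambda>v. v = p)"
    using grid_region_separates_levels[OF assms(1), of p] unfolding grid_region_def by fastforce
  ultimately show ?thesis
    using connected_closedD[OF connected_path_image[OF assms(3)], of "grid_region k F (\<lambda>v. p < v)"
        "grid_region k F (\<lambda>v. v < p)"] assms(4) closed_grid_region
    by blast
qed

lemma connected_component_three_segments:
  fixes a b c d :: "'a::real_normed_vector"
  assumes "closed_segment a c \<subseteq> S" "closed_segment c d \<subseteq> S" "closed_segment d b \<subseteq> S"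
  shows "connected_component S a b"
  using assms
  by (meson connected_segment ends_in_segment connected_component_def connected_component_trans)

lemma subpath_crossing_slab:
  fixes g :: "real \<Rightarrow> 'a::real_inner"
  assumes g: "path g" and u: "u \<noteq> 0"
    and ab: "u \<bullet> pathstart g < a" "a \<le> b" "b < u \<bullet> pathfinish g"
  obtains h where "path h" "path_image h \<subseteq> path_image g \<inter> {z. a \<le> u \<bullet> z \<and> u \<bullet> z \<le> b}"
    "u \<bullet> pathstart h = a" "u \<bullet> pathfinish h = b"
proof -
  define S1 where "S1 = {z. a \<le> u \<bullet> z}"
  define S2 where "S2 = {z. u \<bullet> z \<le> b}"
  obtain h1 where h1: "path h1" "pathstart h1 = pathfinish g"
    "path_image h1 \<subseteq> path_image g \<inter> S1" "pathfinish h1 \<in> frontier S1"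
  proof (rule exists_path_subpath_to_frontier_closed[of S1 "reversepath g"])
    show "closed S1" unfolding S1_def by (rule closed_halfspace_ge)
  qed (use g ab in \<open>auto simp: S1_def path_image_reversepath\<close>)
  have h1a: "u \<bullet> pathfinish h1 = a" using h1(4) u by (simp add: S1_def frontier_halfspace_ge)
  obtain h where h: "path h" "pathstart h = pathfinish h1"
    "path_image h \<subseteq> path_image h1 \<inter> S2" "pathfinish h \<in> frontier S2"
  proof (rule exists_path_subpath_to_frontier_closed[of S2 "reversepath h1"])
    show "closed S2" unfolding S2_def by (rule closed_halfspace_le)
  qed (use h1 h1a ab in \<open>auto simp: S2_def path_image_reversepath\<close>)
  show ?thesis
  proof
    show "path h" by fact
    show "path_image h \<subseteq> path_image g \<inter> {z. a \<le> u \<bullet> z \<and> u \<bullet> z \<le> b}"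
      using h(3) h1(3) unfolding S1_def S2_def by auto
    show "u \<bullet> pathstart h = a" using h(2) h1a by simp
    show "u \<bullet> pathfinish h = b" using h(4) u by (simp add: S2_def frontier_halfspace_le)
  qed
qed

lemma finite_Union_closed_connected_split:
  fixes \<W> :: "'a::topological_space set set"
  assumes fin: "finite \<W>" and closed: "\<And>K. K \<in> \<W> \<Longrightarrow> closed K" and conn: "\<And>K. K \<in> \<W> \<Longrightarrow> connected K"
    and no_link: "\<And>S. S \<subseteq> \<Union>\<W> \<Longrightarrow> connected S \<Longrightarrow> S \<inter> A \<noteq> {} \<Longrightarrow> S \<inter> B \<noteq> {} \<Longrightarrow> False"
  obtains W1 W2 where "closed W1" "closed W2" "\<Union>\<W> = W1 \<union> W2" "W1 \<inter> W2 = {}"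
    "\<Union>\<W> \<inter> A \<subseteq> W1" "\<Union>\<W> \<inter> B \<subseteq> W2"
proof -
  define W where "W = \<Union>\<W>"
  define W1 where "W1 = {z \<in> W. connected_component_set W z \<inter> A \<noteq> {}}"
  have piece: "K \<subseteq> W1 \<or> K \<inter> W1 = {}" if "K \<in> \<W>" for K
  proof -
    have "connected_component_set W z = connected_component_set W w" if "z \<in> K" "w \<in> K" for z w
      using connected_component_maximal[OF \<open>z \<in> K\<close> conn[OF \<open>K \<in> \<W>\<close>]] \<open>K \<in> \<W>\<close> that
      by (metis Sup_upper W_def connected_component_eq subsetD)
    then show ?thesis unfolding W1_def W_def using that by blast
  qed
  have "W1 = \<Union>{K \<in> \<W>. K \<subseteq> W1}" "W - W1 = \<Union>{K \<in> \<W>. K \<inter> W1 = {}}"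
    using piece unfolding W_def W1_def by blast+
  then have "closed W1" "closed (W - W1)"
    using fin closed by (metis (no_types, lifting) closed_Union finite_subset mem_Collect_eq subsetI)+
  moreover have "W \<inter> A \<subseteq> W1" unfolding W1_def using connected_component_refl by fastforce
  moreover have "W \<inter> B \<subseteq> W - W1"
  proof
    fix z assume z: "z \<in> W \<inter> B"
    show "z \<in> W - W1"
    proof (rule ccontr)
      assume "z \<notin> W - W1"
      then have "connected_component_set W z \<inter> A \<noteq> {}" using z unfolding W1_def by blast
      moreover have "connected_component_set W z \<inter> B \<noteq> {}" using z connected_component_refl by fastforce
      ultimately show False
        using no_link[OF connected_component_subset connected_connected_component] unfolding W_def by blast
    qed
  qed
  ultimately show ?thesis using that[of W1 "W - W1"] unfolding W_def W1_def by blast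
qed

(* The hypothesis says that C misses the polygon (-1, 1/2), (-1, h), (2, h), (2, 1/2). *)
lemma connected_component_detour:
  fixes C :: "(real \<times> real) set" and h :: real
  assumes "\<And>z. z \<in> C \<Longrightarrow> snd z \<in> closed_segment (1/2) h \<Longrightarrow> 0 \<le> fst z \<and> fst z \<le> 1 \<and> snd z \<noteq> h"
  shows "connected_component (- C) (-1, 1/2) (2, 1/2)"
proof (rule connected_component_three_segments)
  have side: "closed_segment (x, 1/2) (x, h) \<subseteq> - C" if "x < 0 \<or> 1 < x" for x
  proof
    fix z :: "real \<times> real" assume "z \<in> closed_segment (x, 1/2) (x, h)"
    then have "fst z \<in> closed_segment x x" "snd z \<in> closed_segment (1/2) h"
      using closed_segment_PairD[of "fst z" "snd z" x "1/2" x h] by simp_all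
    then show "z \<in> - C" using assms[of z] that by auto
  qed
  then show "closed_segment (-1, 1/2) (-1, h) \<subseteq> - C" "closed_segment (2, h) (2, 1/2) \<subseteq> - C"
    by (auto simp: closed_segment_commute)
  show "closed_segment (-1, h) (2, h) \<subseteq> - C"
  proof
    fix z :: "real \<times> real" assume "z \<in> closed_segment (-1, h) (2, h)"
    then have "snd z \<in> closed_segment h h"
      using closed_segment_PairD[of "fst z" "snd z" "-1" h 2 h] by simp
    then show "z \<in> - C" using assms[of z] by auto
  qed
qed

lemma separating_set_meets_half_planes:
  fixes C :: "(real \<times> real) set"
  assumes C: "C \<subseteq> cbox (0, 0) (1, 1) \<union> {z. 1 \<le> snd z} \<union> {z. snd z \<le> 0}"
    and separates: "\<not> connected_component (- C) (-1, 1/2) (2, 1/2)"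
  shows "C \<inter> {z. 1 \<le> snd z} \<noteq> {}" "C \<inter> {z. snd z \<le> 0} \<noteq> {}"
proof -
  have "0 \<le> fst z \<and> fst z \<le> 1 \<and> snd z \<noteq> h"
    if "z \<in> C" "snd z \<in> closed_segment (1/2) h" "1 < h \<and> C \<inter> {z. 1 \<le> snd z} = {} \<or>
        h < 0 \<and> C \<inter> {z. snd z \<le> 0} = {}" for z h
    using that C by (auto simp: closed_segment_eq_real_ivl mem_unit_square split: if_splits)
  then show "C \<inter> {z. 1 \<le> snd z} \<noteq> {}" "C \<inter> {z. snd z \<le> 0} \<noteq> {}"
    using separates connected_component_detour[of C 2] connected_component_detour[of C "-1"] by force+
qed

lemma connected_component_outside_strip:
  fixes W1 W2 :: "(real \<times> real) set"
  assumes closed: "closed W1" "closed W2" and disjoint: "W1 \<inter> W2 = {}"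
    and square: "W1 \<union> W2 \<subseteq> cbox (0, 0) (1, 1)"
    and top: "\<And>z. z \<in> W2 \<Longrightarrow> snd z \<noteq> 1" and bottom: "\<And>z. z \<in> W1 \<Longrightarrow> snd z \<noteq> 0"
  shows "connected_component (- (W1 \<union> W2 \<union> {z. 1 \<le> snd z} \<union> {z. snd z \<le> 0})) (-1, 1/2) (2, 1/2)"
proof (rule ccontr)
  define Hp where "Hp = {z::real \<times> real. 1 \<le> snd z}"
  define Hm where "Hm = {z::real \<times> real. snd z \<le> 0}"
  have closed_H: "closed Hp" "closed Hm"
    unfolding Hp_def Hm_def by (intro closed_Collect_le continuous_intros)+
  assume "\<not> connected_component (- (W1 \<union> W2 \<union> {z. 1 \<le> snd z} \<union> {z. snd z \<le> 0})) (-1, 1/2) (2, 1/2)"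
  then have "\<not> connected_component (- (W1 \<union> W2 \<union> Hp \<union> Hm)) (-1, 1/2) (2, 1/2)"
    unfolding Hp_def Hm_def .
  moreover have "closed (W1 \<union> W2 \<union> Hp \<union> Hm)" using closed closed_H by (intro closed_Un)
  ultimately obtain C where C: "C \<in> components (W1 \<union> W2 \<union> Hp \<union> Hm)"
      "\<not> connected_component (- C) (-1, 1/2) (2, 1/2)"
    using separation_by_component_closed_pointwise by blast
  then have CZ: "C \<subseteq> W1 \<union> W2 \<union> Hp \<union> Hm" and conn_C: "connected C"
    using in_components_subset in_components_connected by auto
  have "C \<inter> Hp \<noteq> {}" "C \<inter> Hm \<noteq> {}"
    using separating_set_meets_half_planes[OF _ C(2)] CZ square unfolding Hp_def Hm_def by blast+
  moreover have "(Hp \<union> W1) \<inter> C = {} \<or> (Hm \<union> W2) \<inter> C = {}"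
  proof (rule connected_closedD[OF conn_C])
    have "z \<notin> Hp" if "z \<in> W2" for z
      using top[OF that] square that unfolding Hp_def by (auto simp: mem_unit_square)
    moreover have "z \<notin> Hm" if "z \<in> W1" for z
      using bottom[OF that] square that unfolding Hm_def by (auto simp: mem_unit_square)
    ultimately show "(Hp \<union> W1) \<inter> (Hm \<union> W2) \<inter> C = {}"
      using disjoint unfolding Hp_def Hm_def by auto
    show "C \<subseteq> Hp \<union> W1 \<union> (Hm \<union> W2)" using CZ by blast
  qed (use closed closed_H in auto)
  ultimately show False by blast
qed

lemma left_right_path_in_strip:
  fixes W :: "(real \<times> real) set"
  assumes g0: "path g0" "path_image g0 \<subseteq> - (W \<union> {z. 1 \<le> snd z} \<union> {z. snd z \<le> 0})"
    "pathstart g0 = (-1, 1/2)" "pathfinish g0 = (2, 1/2)"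
  obtains g where "path g" "path_image g \<subseteq> cbox (0, 0) (1, 1) - W"
    "fst (pathstart g) = 0" "fst (pathfinish g) = 1"
proof -
  have fst_inner: "(1, 0) \<bullet> z = fst z" for z :: "real \<times> real" by (cases z) simp
  obtain g where g: "path g" "path_image g \<subseteq> path_image g0 \<inter> {z. 0 \<le> (1, 0) \<bullet> z \<and> (1, 0) \<bullet> z \<le> 1}"
    "(1, 0) \<bullet> pathstart g = 0" "(1, 0) \<bullet> pathfinish g = (1::real)"
    by (rule subpath_crossing_slab[OF g0(1), of "(1, 0)" 0 1]) (simp_all add: g0 zero_prod_def)
  show ?thesis
  proof (rule that[OF g(1)])
    show "path_image g \<subseteq> cbox (0, 0) (1, 1) - W"
    proof
      fix z assume "z \<in> path_image g"
      then have "z \<in> - (W \<union> {z. 1 \<le> snd z} \<union> {z. snd z \<le> 0})" "0 \<le> fst z" "fst z \<le> 1"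
        using g(2) g0(2) unfolding fst_inner by auto
      then show "z \<in> cbox (0, 0) (1, 1) - W" by (simp add: mem_unit_square)
    qed
    show "fst (pathstart g) = 0" "fst (pathfinish g) = 1" using g(3,4) unfolding fst_inner .
  qed
qed

lemma left_right_path_avoiding:
  fixes \<W> :: "(real \<times> real) set set"
  assumes fin: "finite \<W>" and closed: "\<And>K. K \<in> \<W> \<Longrightarrow> closed K" and conn: "\<And>K. K \<in> \<W> \<Longrightarrow> connected K"
    and square: "\<Union>\<W> \<subseteq> cbox (0, 0) (1, 1)"
    and no_cross: "\<And>S. S \<subseteq> \<Union>\<W> \<Longrightarrow> connected S \<Longrightarrow> (\<exists>z\<in>S. snd z = 0) \<Longrightarrow> (\<exists>z\<in>S. snd z = 1) \<Longrightarrow> False"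
  obtains g where "path g" "path_image g \<subseteq> cbox (0, 0) (1, 1) - \<Union>\<W>"
    "fst (pathstart g) = 0" "fst (pathfinish g) = 1"
proof -
  define Z where "Z = \<Union>\<W> \<union> {z. 1 \<le> snd z} \<union> {z. snd z \<le> 0}"
  obtain W1 W2 where W12: "closed W1" "closed W2" "\<Union>\<W> = W1 \<union> W2" "W1 \<inter> W2 = {}"
    "\<Union>\<W> \<inter> {z. snd z = 1} \<subseteq> W1" "\<Union>\<W> \<inter> {z. snd z = 0} \<subseteq> W2"
  proof (rule finite_Union_closed_connected_split[OF fin closed conn, of "{z. snd z = 1}" "{z. snd z = 0}"])
    show False if "S \<subseteq> \<Union>\<W>" "connected S" "S \<inter> {z. snd z = 1} \<noteq> {}" "S \<inter> {z. snd z = 0} \<noteq> {}" for S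
      using no_cross[OF that(1,2)] that(3,4) by blast
  qed
  have "connected_component (- Z) (-1, 1/2) (2, 1/2)"
    unfolding Z_def W12(3)
  proof (rule connected_component_outside_strip[OF W12(1,2,4)])
    show "W1 \<union> W2 \<subseteq> cbox (0, 0) (1, 1)" using square W12(3) by simp
    show "snd z \<noteq> 1" if "z \<in> W2" for z using that W12(3-5) by blast
    show "snd z \<noteq> 0" if "z \<in> W1" for z using that W12(3,4,6) by blast
  qed
  moreover have "closed Z"
  proof -
    have "closed (\<Union>\<W>)" using fin closed by (simp add: closed_Union)
    moreover have "closed {z::real \<times> real. 1 \<le> snd z}" "closed {z::real \<times> real. snd z \<le> 0}"
      by (intro closed_Collect_le continuous_intros)+
    ultimately show ?thesis unfolding Z_def by (intro closed_Un)
  qed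
  ultimately have "path_component (- Z) (-1, 1/2) (2, 1/2)"
    by (simp add: open_path_connected_component open_Compl)
  then obtain g0 where "path g0" "path_image g0 \<subseteq> - Z" "pathstart g0 = (-1, 1/2)" "pathfinish g0 = (2, 1/2)"
    unfolding path_component_def by blast
  then show ?thesis using left_right_path_in_strip that unfolding Z_def by blast
qed

lemma bottom_top_path_avoiding:
  fixes \<W> :: "(real \<times> real) set set"
  assumes fin: "finite \<W>" and closed: "\<And>K. K \<in> \<W> \<Longrightarrow> closed K" and conn: "\<And>K. K \<in> \<W> \<Longrightarrow> connected K"
    and square: "\<Union>\<W> \<subseteq> cbox (0, 0) (1, 1)"
    and no_cross: "\<And>S. S \<subseteq> \<Union>\<W> \<Longrightarrow> connected S \<Longrightarrow> (\<exists>z\<in>S. fst z = 0) \<Longrightarrow> (\<exists>z\<in>S. fst z = 1) \<Longrightarrow> False"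
  obtains g where "path g" "path_image g \<subseteq> cbox (0, 0) (1, 1) - \<Union>\<W>"
    "snd (pathstart g) = 0" "snd (pathfinish g) = 1"
proof -
  define \<V> where "\<V> = (`) prod.swap ` \<W>"
  have swap_swap: "prod.swap ` prod.swap ` S = S" for S :: "(real \<times> real) set"
    by (simp add: image_comp)
  have swap_square: "prod.swap ` cbox (0, 0) (1, 1) = (cbox (0, 0) (1, 1) :: (real \<times> real) set)"
    by simp
  have Union_\<V>: "\<Union>\<V> = prod.swap ` \<Union>\<W>"
    unfolding \<V>_def by (simp add: image_Union)
  obtain g where g: "path g" "path_image g \<subseteq> cbox (0, 0) (1, 1) - \<Union>\<V>"
    "fst (pathstart g) = 0" "fst (pathfinish g) = 1"
  proof (rule left_right_path_avoiding[of \<V>])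
    show "finite \<V>" using fin unfolding \<V>_def by simp
    show "closed K" "connected K" if K: "K \<in> \<V>" for K
    proof -
      obtain K0 where K0: "K0 \<in> \<W>" "K = prod.swap ` K0"
        using K unfolding \<V>_def by blast
      have "prod.swap ` K0 = prod.swap -` K0" by force
      then show "closed K" using K0 closed by (metis continuous_closed_vimage isCont_swap)
      show "connected K" using K0 conn by (metis connected_continuous_image continuous_on_swap)
    qed
    show "\<Union>\<V> \<subseteq> cbox (0, 0) (1, 1)"
      using image_mono[OF square, of prod.swap] unfolding Union_\<V> swap_square .
    show False if "S \<subseteq> \<Union>\<V>" "connected S" "\<exists>z\<in>S. snd z = 0" "\<exists>z\<in>S. snd z = 1" for S
    proof (rule no_cross[of "prod.swap ` S"])
      show "prod.swap ` S \<subseteq> \<Union>\<W>"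
        using image_mono[OF that(1), of prod.swap] unfolding Union_\<V> swap_swap .
      show "connected (prod.swap ` S)"
        using that(2) by (intro connected_continuous_image continuous_on_swap)
      show "\<exists>z\<in>prod.swap ` S. fst z = 0" "\<exists>z\<in>prod.swap ` S. fst z = 1"
        using that(3,4) by auto
    qed
  qed
  show ?thesis
  proof (rule that[of "prod.swap \<circ> g"])
    show "path (prod.swap \<circ> g)" using g(1) by (intro path_continuous_image continuous_on_swap)
    have "prod.swap ` path_image g \<subseteq> cbox (0, 0) (1, 1) - \<Union>\<W>"
      using image_mono[OF g(2), of prod.swap]
      unfolding image_set_diff[OF inj_swap] Union_\<V> swap_swap swap_square .
    then show "path_image (prod.swap \<circ> g) \<subseteq> cbox (0, 0) (1, 1) - \<Union>\<W>"
      by (simp add: path_image_compose)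
  qed (use g(3,4) in \<open>simp_all add: pathstart_compose pathfinish_compose\<close>)
qed

lemma fashoda_Pair:
  fixes f g :: "real \<Rightarrow> real \<times> real"
  assumes "path f" "path g" "path_image f \<subseteq> cbox a b" "path_image g \<subseteq> cbox a b"
    and "fst (pathstart f) = fst a" "fst (pathfinish f) = fst b"
    and "snd (pathstart g) = snd a" "snd (pathfinish g) = snd b"
  shows "path_image f \<inter> path_image g \<noteq> {}"
proof -
  define \<psi> :: "real \<times> real \<Rightarrow> real^2" where "\<psi> z = (\<chi> i. if i = 1 then fst z else snd z)" for z
  have \<psi>_nth [simp]: "\<psi> z $ 1 = fst z" "\<psi> z $ 2 = snd z" for z
    by (simp_all add: \<psi>_def)
  have "inj \<psi>" by (metis \<psi>_nth injI prod_eq_iff)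
  have "continuous_on S \<psi>" for S
    unfolding \<psi>_def
  proof (rule continuous_on_vec_lambda)
    show "continuous_on S (\<lambda>z. if i = 1 then fst z else snd z)" for i :: 2
      by (cases "i = 1") (simp_all add: continuous_on_fst continuous_on_snd continuous_on_id)
  qed
  then have paths: "path (\<psi> \<circ> f)" "path (\<psi> \<circ> g)"
    using assms(1,2) by (simp_all add: path_continuous_image)
  have "\<psi> z \<in> cbox (\<psi> a) (\<psi> b)" if "z \<in> cbox a b" for z
  proof -
    have "fst a \<le> fst z \<and> fst z \<le> fst b \<and> snd a \<le> snd z \<and> snd z \<le> snd b"
      using that by (cases a, cases b, cases z) simp
    then show ?thesis by (simp add: mem_box_cart forall_2)
  qed
  then have "path_image (\<psi> \<circ> f) \<subseteq> cbox (\<psi> a) (\<psi> b)" "path_image (\<psi> \<circ> g) \<subseteq> cbox (\<psi> a) (\<psi> b)"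
    using assms(3,4) unfolding path_image_compose by blast+
  then obtain z where "z \<in> path_image (\<psi> \<circ> f)" "z \<in> path_image (\<psi> \<circ> g)"
    by (rule fashoda[OF paths]) (simp_all add: assms(5-8) pathstart_compose pathfinish_compose)
  then show ?thesis using \<open>inj \<psi>\<close> unfolding path_image_compose by (auto simp: inj_eq)
qed

lemma level_avoiding_paths:
  assumes no_cross: "\<And>S. S \<subseteq> grid_region k F P \<Longrightarrow> \<not> connects_opposite_faces S"
  obtains L T where "path L" "path_image L \<subseteq> cbox (0, 0) (1, 1) - grid_region k F P"
    "fst (pathstart L) = 0" "fst (pathfinish L) = 1"
    and "path T" "path_image T \<subseteq> cbox (0, 0) (1, 1) - grid_region k F P"
    "snd (pathstart T) = 0" "snd (pathfinish T) = 1"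
proof -
  define \<U> where "\<U> = {K \<in> grid_cubes k. P (F K)}"
  have region: "\<Union>\<U> = grid_region k F P" unfolding \<U>_def grid_region_def ..
  have fin: "finite \<U>" unfolding \<U>_def using finite_grid_cubes by simp
  have cubes: "closed K" "connected K" if "K \<in> \<U>" for K
    using that grid_cube_props unfolding \<U>_def by auto
  have square: "\<Union>\<U> \<subseteq> cbox (0, 0) (1, 1)"
    using grid_cube_props(3) unfolding \<U>_def by blast
  obtain L where "path L" "path_image L \<subseteq> cbox (0, 0) (1, 1) - \<Union>\<U>"
    "fst (pathstart L) = 0" "fst (pathfinish L) = 1"
  proof (rule left_right_path_avoiding[OF fin cubes square])
    show False if "S \<subseteq> \<Union>\<U>" "connected S" "\<exists>z\<in>S. snd z = 0" "\<exists>z\<in>S. snd z = 1" for S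
      using that no_cross[of S] unfolding region connects_opposite_faces_def by blast
  qed
  moreover obtain T where "path T" "path_image T \<subseteq> cbox (0, 0) (1, 1) - \<Union>\<U>"
    "snd (pathstart T) = 0" "snd (pathfinish T) = 1"
  proof (rule bottom_top_path_avoiding[OF fin cubes square])
    show False if "S \<subseteq> \<Union>\<U>" "connected S" "\<exists>z\<in>S. fst z = 0" "\<exists>z\<in>S. fst z = 1" for S
      using that no_cross[of S] unfolding region connects_opposite_faces_def by blast
  qed
  ultimately show ?thesis using that unfolding region by blast
qed

lemma left_right_path_above_level_step:
  assumes adm: "admissible2 1 k F" and k: "k \<ge> 1"
    and L: "\<And>p. path (L p)" "\<And>p. path_image (L p) \<subseteq> cbox (0, 0) (1, 1) - grid_region k F (\<lambda>v. v = p)"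
      "\<And>p. fst (pathstart (L p)) = 0" "\<And>p. fst (pathfinish (L p)) = 1"
    and T: "path T" "path_image T \<subseteq> cbox (0, 0) (1, 1) - grid_region k F (\<lambda>v. v = p)"
      "snd (pathstart T) = 0" "snd (pathfinish T) = 1"
    and L_above: "path_image (L p) \<subseteq> grid_region k F (\<lambda>v. p < v)"
  shows "path_image (L (p + 1)) \<subseteq> grid_region k F (\<lambda>v. p + 1 < v)"
proof -
  define A where "A q = grid_region k F (\<lambda>v. q < v)" for q
  define B where "B q = grid_region k F (\<lambda>v. v < q)" for q
  have meet: "path_image (L q) \<inter> path_image T \<noteq> {}" for q
  proof -
    have "path_image (L q) \<subseteq> cbox (0, 0) (1, 1)" "path_image T \<subseteq> cbox (0, 0) (1, 1)"
      using L(2) T(2) by blast+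
    then show ?thesis using fashoda_Pair[OF L(1) T(1)] L(3,4) T(3,4) by simp
  qed
  have sep: "A p \<inter> B (p + 1) \<subseteq> grid_region k F (\<lambda>v. v = p)"
    using grid_region_separates_levels[OF adm] unfolding A_def B_def by simp
  have "B p \<subseteq> B (p + 1)" unfolding B_def grid_region_def by auto
  then have "\<not> path_image T \<subseteq> B p"
    using meet[of p] L_above sep T(2) unfolding A_def by blast
  then have "path_image T \<subseteq> A p"
    using path_avoiding_level_in_one_side[OF adm k T(1,2)] unfolding A_def B_def by blast
  then have "\<not> path_image (L (p + 1)) \<subseteq> B (p + 1)"
    using meet[of "p + 1"] sep T(2) by blast
  then show ?thesis
    using path_avoiding_level_in_one_side[OF adm k L(1,2)] unfolding B_def by blast
qed

lemma exists_grid_level_crossing: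
  assumes adm: "admissible2 1 k F" and k: "k \<ge> 1"
  shows "\<exists>p S. S \<subseteq> grid_region k F (\<lambda>v. v = p) \<and> connects_opposite_faces S"
proof (rule ccontr)
  assume "\<nexists>p S. S \<subseteq> grid_region k F (\<lambda>v. v = p) \<and> connects_opposite_faces S"
  then have "\<exists>L T. path L \<and> path_image L \<subseteq> cbox (0, 0) (1, 1) - grid_region k F (\<lambda>v. v = p) \<and>
      fst (pathstart L) = 0 \<and> fst (pathfinish L) = 1 \<and>
      path T \<and> path_image T \<subseteq> cbox (0, 0) (1, 1) - grid_region k F (\<lambda>v. v = p) \<and>
      snd (pathstart T) = 0 \<and> snd (pathfinish T) = 1" for p
    by (metis level_avoiding_paths)
  then obtain L T where L: "\<And>p. path (L p)"
      "\<And>p. path_image (L p) \<subseteq> cbox (0, 0) (1, 1) - grid_region k F (\<lambda>v. v = p)"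
      "\<And>p. fst (pathstart (L p)) = 0" "\<And>p. fst (pathfinish (L p)) = 1"
    and T: "\<And>p. path (T p)" "\<And>p. path_image (T p) \<subseteq> cbox (0, 0) (1, 1) - grid_region k F (\<lambda>v. v = p)"
      "\<And>p. snd (pathstart (T p)) = 0" "\<And>p. snd (pathfinish (T p)) = 1"
    by metis
  define M where "M = Max (insert 0 ((\<lambda>K. \<bar>F K\<bar>) ` grid_cubes k))"
  have M: "0 \<le> M" "\<And>K. K \<in> grid_cubes k \<Longrightarrow> \<bar>F K\<bar> \<le> M"
    unfolding M_def using finite_grid_cubes by simp_all
  have "grid_region k F (\<lambda>v. v < - M) = {}" "grid_region k F (\<lambda>v. M < v) = {}"
    unfolding grid_region_def by (auto simp: abs_le_iff dest!: M(2))
  then have base: "path_image (L (- M)) \<subseteq> grid_region k F (\<lambda>v. - M < v)"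
    using path_avoiding_level_in_one_side[OF adm k L(1,2)] by blast
  have "path_image (L q) \<subseteq> grid_region k F (\<lambda>v. q < v)" if "- M \<le> q" for q
    using that
  proof (induction q rule: int_ge_induct)
    case (step q)
    show ?case by (rule left_right_path_above_level_step[OF adm k L T step.IH])
  qed (rule base)
  then have "path_image (L M) \<subseteq> grid_region k F (\<lambda>v. M < v)" using M(1) by simp
  then show False using \<open>grid_region k F (\<lambda>v. M < v) = {}\<close> path_image_nonempty by blast
qed

lemma connects_opposite_faces_superset:
  assumes "connects_opposite_faces S" "S \<subseteq> T" "connected T"
  shows "connects_opposite_faces T"
  using assms unfolding connects_opposite_faces_def by (meson subsetD)

lemma connects_opposite_faces_grid_cubes:
  assumes "S \<subseteq> grid_region k F P" "connects_opposite_faces S"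
  obtains \<S> where "\<S> \<subseteq> grid_cubes k" "\<forall>K\<in>\<S>. P (F K)" "connects_opposite_faces (\<Union>\<S>)"
proof -
  from assms(2) obtain z where "z \<in> S" "connected S"
    unfolding connects_opposite_faces_def by blast
  define C where "C = connected_component_set (grid_region k F P) z"
  have "S \<subseteq> C"
    unfolding C_def using connected_component_maximal \<open>z \<in> S\<close> \<open>connected S\<close> assms(1) .
  then have C: "connects_opposite_faces C"
    using connects_opposite_faces_superset[OF assms(2)] unfolding C_def by blast
  have "C \<subseteq> \<Union>{K \<in> grid_cubes k. P (F K) \<and> K \<subseteq> C}"
  proof
    fix w assume "w \<in> C"
    then obtain K where K: "K \<in> grid_cubes k" "P (F K)" "w \<in> K"
      using connected_component_subset unfolding C_def grid_region_def by blast
    then have "K \<subseteq> connected_component_set (grid_region k F P) w"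
      by (intro connected_component_maximal grid_cube_props(2)) (auto simp: grid_region_def)
    also have "\<dots> = C" using \<open>w \<in> C\<close> unfolding C_def by (rule connected_component_eq)
    finally show "w \<in> \<Union>{K \<in> grid_cubes k. P (F K) \<and> K \<subseteq> C}" using K by blast
  qed
  then have "\<Union>{K \<in> grid_cubes k. P (F K) \<and> K \<subseteq> C} = C" by blast
  with C show ?thesis by (intro that[of "{K \<in> grid_cubes k. P (F K) \<and> K \<subseteq> C}"]) simp_all
qed

lemma one_connected_singleton: "one_connected {p}"
  unfolding one_connected_def by (auto intro!: exI[of _ "[p]"])

lemma good_const2_1_1: "good_const2 1 1"
  unfolding good_const2_def
proof (intro allI impI)
  fix k :: nat and F assume "k \<ge> 1" "admissible2 1 k F"
  then obtain p S where "S \<subseteq> grid_region k F (\<lambda>v. v = p)" "connects_opposite_faces S"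
    using exists_grid_level_crossing by blast
  then obtain \<S> where "\<S> \<subseteq> grid_cubes k" "\<forall>K\<in>\<S>. F K \<in> {p}" "connects_opposite_faces (\<Union>\<S>)"
    by (rule connects_opposite_faces_grid_cubes) auto
  moreover have "finite {p}" "one_connected {p}" "real (card {p}) \<le> 1"
    by (simp_all add: one_connected_singleton)
  ultimately show "\<exists>P. finite P \<and> one_connected P \<and> real (card P) \<le> 1 \<and>
      (\<exists>\<S>\<subseteq>grid_cubes k. (\<forall>K\<in>\<S>. F K \<in> P) \<and> connects_opposite_faces (\<Union>\<S>))"
    by blast
qed

lemma good_const2_antimono:
  assumes "m' \<le> m" "good_const2 m C"
  shows "good_const2 m' C"
  unfolding good_const2_def
proof (intro allI impI)
  fix k :: nat and F assume k: "k \<ge> 1" and adm': "admissible2 m' k F"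
  have "admissible2 m k F"
    using adm' assms(1) unfolding admissible2_def by (meson of_nat_le_iff order_trans)
  then show "\<exists>P. finite P \<and> one_connected P \<and> real (card P) \<le> C \<and>
      (\<exists>\<S>\<subseteq>grid_cubes k. (\<forall>K\<in>\<S>. F K \<in> P) \<and> connects_opposite_faces (\<Union>\<S>))"
    using assms(2) k unfolding good_const2_def by blast
qed

lemma good_const2_ge_1:
  assumes "good_const2 m C"
  shows "1 \<le> C"
proof -
  have "admissible2 m 1 (\<lambda>_. 0)" unfolding admissible2_def by simp
  then obtain P \<S> where P: "finite P" "real (card P) \<le> C"
    and \<S>: "\<forall>K\<in>\<S>. (0::int) \<in> P" "connects_opposite_faces (\<Union>\<S>)"
    using assms[unfolded good_const2_def, rule_format, of 1 "\<lambda>_. 0"] by auto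
  have "\<S> \<noteq> {}" using \<S>(2) unfolding connects_opposite_faces_def by auto
  then have "P \<noteq> {}" using \<S>(1) by blast
  then have "1 \<le> card P" using P(1) by (simp add: Suc_le_eq card_gt_0_iff)
  then show ?thesis using P(2) by linarith
qed

lemma good_const2_mono:
  assumes "good_const2 m C" "C \<le> C'"
  shows "good_const2 m C'"
  unfolding good_const2_def
proof (intro allI impI)
  fix k :: nat and F assume k: "k \<ge> 1" and adm: "admissible2 m k F"
  obtain P where P: "finite P" "one_connected P" "real (card P) \<le> C"
      "\<exists>\<S>\<subseteq>grid_cubes k. (\<forall>K\<in>\<S>. F K \<in> P) \<and> connects_opposite_faces (\<Union>\<S>)"
    using assms(1)[unfolded good_const2_def, rule_format, OF k adm] by blast
  have "real (card P) \<le> C'" using P(3) assms(2) by linarith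
  with P show "\<exists>P. finite P \<and> one_connected P \<and> real (card P) \<le> C' \<and>
      (\<exists>\<S>\<subseteq>grid_cubes k. (\<forall>K\<in>\<S>. F K \<in> P) \<and> connects_opposite_faces (\<Union>\<S>))"
    by (intro exI[of _ P]) simp
qed

lemma C_hat2_eq_1:
  assumes "good_const2 m 1"
  shows "C_hat2 m = 1"
proof -
  have "C \<in> {C. C > 0 \<and> good_const2 m C} \<longleftrightarrow> C \<in> {1..}" for C
    using good_const2_ge_1[of m C] good_const2_mono[OF assms, of C] by auto
  then have "{C. C > 0 \<and> good_const2 m C} = {1..}" by blast
  then show ?thesis unfolding C_hat2_def by (simp add: cInf_atLeast)
qed

theorem proposition5p1:
  shows "C_hat2 0 = 1 \<and> C_hat2 1 = 1"
  using C_hat2_eq_1 good_const2_1_1 good_const2_antimono[of 0 1] by auto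

end
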